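(* Let $a$ be a positive real number and $k\in\mathbb{N}$, and assume the integrals below converge. Then \[ \lim_{k\to\infty}\int_{[0,\infty)^{2k}}\frac{\cos\left(\sum_{n=1}^{2k}(-1)^{n+1}x_n\right)}{\sum_{n=1}^k\frac{x_{2n}}{a+n-1}+\sum_{n=1}^k\frac{x_{2n-1}}{a+n-1}}\prod_{n=1}^{2k}dx_n=\frac{1}{2}\sqrt{\pi}\,\frac{\Gamma\left(a+\frac12\right)}{\Gamma(a)}, \] and, for every $k\in\mathbb{N}$, \[ \int_{[0,\infty)^{2k}}\frac{\sin\left(\sum_{n=1}^{2k}(-1)^{n+1}x_n\right)}{\sum_{n=1}^k\frac{x_{2n}}{a+n-1}+\sum_{n=1}^k\frac{x_{2n-1}}{a+n-1}}\prod_{n=1}^{2k}dx_n=0. \]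
   Context: $\Gamma$ denotes Euler's gamma function. *)

theory Defs
  imports "HOL-Analysis.Analysis" "HOL-Probability.Probability"
begin

text \<open>Points of [0,oo)^(2k) are functions x :: nat => real, coordinates x 0, ..., x (2k-1)
  (0-indexed: x_n of the paper is x (n-1)).\<close>

definition num_arg :: "nat \<Rightarrow> (nat \<Rightarrow> real) \<Rightarrow> real" where
  "num_arg k x = (\<Sum>i<2*k. (-1)^i * x i)"

definition denom :: "real \<Rightarrow> nat \<Rightarrow> (nat \<Rightarrow> real) \<Rightarrow> real" where
  "denom a k x = (\<Sum>m<k. x (2*m+1) / (a + real m)) + (\<Sum>m<k. x (2*m) / (a + real m))"

definition cos_integrand :: "real \<Rightarrow> nat \<Rightarrow> (nat \<Rightarrow> real) \<Rightarrow> real" where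
  "cos_integrand a k x = cos (num_arg k x) / denom a k x"

definition sin_integrand :: "real \<Rightarrow> nat \<Rightarrow> (nat \<Rightarrow> real) \<Rightarrow> real" where
  "sin_integrand a k x = sin (num_arg k x) / denom a k x"

definition cube :: "nat \<Rightarrow> real \<Rightarrow> (nat \<Rightarrow> real) measure" where
  "cube k R = PiM {..<2*k} (\<lambda>_. restrict_space lborel {0..R})"

text \<open>Improper integral over [0,oo)^(2k): limit of the integrals over [0,R]^(2k), R -> oo.\<close>
definition improper_convergent :: "nat \<Rightarrow> ((nat \<Rightarrow> real) \<Rightarrow> real) \<Rightarrow> bool" where
  "improper_convergent k f \<longleftrightarrow>
     (\<forall>R\<ge>0. integrable (cube k R) f) \<and>
     (\<exists>L. ((\<lambda>R. integral\<^sup>L (cube k R) f) \<longlongrightarrow> L) at_top)"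

definition improper_integral :: "nat \<Rightarrow> ((nat \<Rightarrow> real) \<Rightarrow> real) \<Rightarrow> real" where
  "improper_integral k f = Lim at_top (\<lambda>R. integral\<^sup>L (cube k R) f)"

end

theory Submission
  imports Defs "HOL-Real_Asymp.Real_Asymp"
begin

text \<open>
  Write \<open>cos \<theta> / D + \<i> sin \<theta> / D = exp (\<i>\<theta>) / D\<close> and \<open>1 / D = \<integral>\<^sub>0\<^sup>\<infinity> exp (- t D) dt\<close>.
  Both \<open>\<theta>\<close> and \<open>D\<close> are linear in \<open>x\<close>, so for fixed \<open>t\<close> the integral of \<open>exp (\<i>\<theta> - t D)\<close>
  over \<open>[0,R]\<^sup>2\<^sup>k\<close> factorises into one-dimensional integrals. The coordinates \<open>x (2m)\<close> and
  \<open>x (2m+1)\<close> carry the conjugate exponents \<open>\<plusminus>\<i> - t/(a+m)\<close>, so the product is the nonnegative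
  real number \<open>\<Prod>m<k. \<bar>\<integral>\<^sub>0\<^sup>R exp ((\<i> - t/(a+m)) y) dy\<bar>\<^sup>2\<close>. Hence the sine integral vanishes,
  and the cosine integral over the cube is the integral of this kernel over \<open>t \<ge> 0\<close>; as
  \<open>R \<rightarrow> \<infinity>\<close> it tends to \<open>\<integral>\<^sub>0\<^sup>\<infinity> \<Prod>m<k. 1 / (1 + (t/(a+m))\<^sup>2) dt\<close>. A partial-fraction
  recursion in \<open>k\<close> evaluates this as \<open>\<pi>/2 \<cdot> (a)\<^sub>k (1/2)\<^sub>k\<^sub>-\<^sub>1 / ((a+1/2)\<^sub>k\<^sub>-\<^sub>1 (k-1)!)\<close>,
  and Gauss's product formula for \<open>\<Gamma>\<close> gives its limit as \<open>k \<rightarrow> \<infinity>\<close>.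
\<close>

section \<open>Integrals of products of Lorentzians\<close>

definition lorentz_weight :: "real \<Rightarrow> nat \<Rightarrow> real \<Rightarrow> real" where
  "lorentz_weight a k t = (\<Prod>m<k. 1 / (1 + (t / (a + real m))^2))"

definition lorentz_integral :: "real \<Rightarrow> nat \<Rightarrow> real" where
  "lorentz_integral a n =
     pi / 2 * pochhammer a (Suc n) * pochhammer (1/2) n / (pochhammer (a + 1/2) n * fact n)"

lemma lorentz_weight_nonneg: "0 \<le> lorentz_weight a k t"
  unfolding lorentz_weight_def by (intro prod_nonneg) (simp add: add_pos_nonneg)

lemma measurable_lorentz_weight [measurable]: "lorentz_weight a k \<in> borel_measurable borel"
  unfolding lorentz_weight_def by measurable

lemma lorentz_weight_antimono:
  assumes "m \<le> k"
  shows "lorentz_weight a k t \<le> lorentz_weight a m t"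
  using assms
proof (induction k rule: dec_induct)
  case (step k)
  have "lorentz_weight a (Suc k) t = lorentz_weight a k t * (1 / (1 + (t / (a + real k))^2))"
    by (simp add: lorentz_weight_def)
  also have "\<dots> \<le> lorentz_weight a k t"
    by (rule mult_left_le) (simp_all add: lorentz_weight_nonneg divide_le_eq_1 add_pos_nonneg)
  finally show ?case using step.IH by simp
qed simp

lemma lorentz_weight_Suc_Suc:
  fixes a t :: real
  assumes a: "a > 0"
  shows "(real n + 1) * (2 * a + real n + 1) * lorentz_weight a (Suc (Suc n)) t
       = (a + real n + 1)^2 * lorentz_weight a (Suc n) t - a^2 * lorentz_weight (a + 1) (Suc n) t"
proof -
  define Q u v where "Q = lorentz_weight (a + 1) n t"
    and "u = 1 + (t / a)^2" and "v = 1 + (t / (a + real n + 1))^2"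
  have "u > 0" "v > 0" unfolding u_def v_def by (simp_all add: add_pos_nonneg)
  have Suc: "lorentz_weight a (Suc n) t = Q / u"
    unfolding lorentz_weight_def Q_def u_def by (subst prod.lessThan_Suc_shift) (simp add: add_ac)
  then have Suc_Suc: "lorentz_weight a (Suc (Suc n)) t = Q / u / v"
    unfolding lorentz_weight_def v_def by (simp add: add_ac)
  have shift: "lorentz_weight (a + 1) (Suc n) t = Q / v"
    unfolding lorentz_weight_def Q_def v_def by (simp add: add_ac)
  have "(a + real n + 1)^2 * v = (a + real n + 1)^2 + t^2" "a^2 * u = a^2 + t^2"
    unfolding u_def v_def using a by (simp_all add: field_simps)
  then have "(a + real n + 1)^2 * v - a^2 * u = (real n + 1) * (2 * a + real n + 1)"
    by (simp add: power2_eq_square algebra_simps)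
  moreover have "(a + real n + 1)^2 * (Q / u) - a^2 * (Q / v) = ((a + real n + 1)^2 * v - a^2 * u) * (Q / u / v)"
    using \<open>u > 0\<close> \<open>v > 0\<close> by (simp add: field_simps)
  ultimately show ?thesis
    unfolding Suc Suc_Suc shift by simp
qed

lemma lorentz_integral_Suc:
  fixes a :: real
  assumes a: "a > 0"
  shows "(real n + 1) * (2 * a + real n + 1) * lorentz_integral a (Suc n)
       = (a + real n + 1)^2 * lorentz_integral a n - a^2 * lorentz_integral (a + 1) n"
proof -
  define P H B F where "P = pochhammer a (Suc n)" and "H = pochhammer (1/2 :: real) n"
    and "B = pochhammer (a + 1/2) n" and "F = (fact n :: real)"
  define K A C where "K = lorentz_integral a n" and "A = a + real n + 1" and "C = a + real n + 1/2"
  have "B > 0" "F > 0" "C > 0"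
    using a unfolding B_def F_def C_def by (simp_all add: pochhammer_pos)
  have K: "K = pi / 2 * P * H / (B * F)"
    unfolding K_def lorentz_integral_def P_def H_def B_def F_def ..
  have "lorentz_integral a (Suc n) = pi / 2 * (P * A) * (H * (real n + 1/2)) / (B * C * (F * (real n + 1)))"
    unfolding lorentz_integral_def P_def H_def B_def F_def A_def C_def by (simp add: pochhammer_Suc add_ac)
  also have "\<dots> = K * (A * (real n + 1/2)) / (C * (real n + 1))"
    unfolding K using \<open>B > 0\<close> \<open>F > 0\<close> \<open>C > 0\<close> by (simp add: field_simps)
  finally have step: "lorentz_integral a (Suc n) = K * (A * (real n + 1/2)) / (C * (real n + 1))" .
  have "pochhammer (a + 1) (Suc n) = P * A / a"
    using pochhammer_rec[of a "Suc n"] pochhammer_Suc[of a "Suc n"] a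
    unfolding P_def A_def by (simp add: field_simps add_ac)
  moreover have "pochhammer (a + 1 + 1/2) n = B * C / (a + 1/2)"
    using pochhammer_rec[of "a + 1/2" n] pochhammer_Suc[of "a + 1/2" n] a
    unfolding B_def C_def by (simp add: field_simps add_ac)
  ultimately have "lorentz_integral (a + 1) n = pi / 2 * (P * A / a) * H / (B * C / (a + 1/2) * F)"
    unfolding lorentz_integral_def H_def F_def by simp
  also have "\<dots> = K * (A * (a + 1/2)) / (a * C)"
    unfolding K using a \<open>B > 0\<close> \<open>F > 0\<close> \<open>C > 0\<close> by (simp add: field_simps)
  finally have shift: "lorentz_integral (a + 1) n = K * (A * (a + 1/2)) / (a * C)" .
  have "(real n + 1) * (2 * a + real n + 1) * (K * (A * (real n + 1/2)) / (C * (real n + 1)))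
      = K * A * ((2 * a + real n + 1) * (real n + 1/2)) / C"
    by simp
  also have "(2 * a + real n + 1) * (real n + 1/2) = A * C - a * (a + 1/2)"
    unfolding A_def C_def by (simp add: field_simps)
  also have "K * A * (A * C - a * (a + 1/2)) / C = A^2 * K - a^2 * (K * (A * (a + 1/2)) / (a * C))"
    using a \<open>C > 0\<close> by (simp add: field_simps power2_eq_square)
  finally show ?thesis unfolding step shift K_def A_def .
qed

lemma has_bochner_integral_lorentzian:
  fixes c :: real
  assumes c: "c > 0"
  shows "has_bochner_integral lborel (\<lambda>t. indicator {0..} t * (1 / (1 + (t / c)^2))) (pi / 2 * c)"
proof (rule has_bochner_integral_nn_integral)
  have lim: "((\<lambda>t. c * arctan (t / c)) \<longlongrightarrow> c * (pi / 2)) at_top"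
    using c by real_asymp
  have "(\<integral>\<^sup>+t. ennreal (1 / (1 + (t / c)^2)) * indicator {0..} t \<partial>lborel) = c * (pi / 2) - c * arctan (0 / c)"
  proof (rule nn_integral_FTC_atLeast[OF _ _ _ lim])
    fix t :: real
    have "c\<^sup>2 + t\<^sup>2 > 0" using c by (simp add: add_pos_nonneg)
    then show "DERIV (\<lambda>t. c * arctan (t / c)) t :> 1 / (1 + (t / c)^2)"
      using c by (auto intro!: derivative_eq_intros simp: field_simps power2_eq_square)
  qed simp_all
  then show "(\<integral>\<^sup>+t. ennreal (indicator {0..} t * (1 / (1 + (t / c)^2))) \<partial>lborel) = ennreal (pi / 2 * c)"
    by (simp add: mult.commute indicator_mult_ennreal)
qed (use c in auto)

lemma has_bochner_integral_lorentz_weight: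
  fixes a :: real
  assumes "a > 0"
  shows "has_bochner_integral lborel (\<lambda>t. indicator {0..} t * lorentz_weight a (Suc n) t) (lorentz_integral a n)"
  using assms
proof (induction n arbitrary: a)
  case 0
  then show ?case
    using has_bochner_integral_lorentzian[of a]
    by (simp add: lorentz_weight_def lorentz_integral_def mult.commute)
next
  case (Suc n)
  define c where "c = (real n + 1) * (2 * a + real n + 1)"
  have "c > 0" unfolding c_def using Suc.prems by simp
  have "has_bochner_integral lborel
      (\<lambda>t. ((a + real n + 1)^2 * (indicator {0..} t * lorentz_weight a (Suc n) t)
            - a^2 * (indicator {0..} t * lorentz_weight (a + 1) (Suc n) t)) / c)
      (((a + real n + 1)^2 * lorentz_integral a n - a^2 * lorentz_integral (a + 1) n) / c)"
    using Suc.prems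
    by (intro has_bochner_integral_divide_zero has_bochner_integral_diff has_bochner_integral_mult_right Suc.IH)
      simp_all
  moreover have "((a + real n + 1)^2 * lorentz_integral a n - a^2 * lorentz_integral (a + 1) n) / c
      = lorentz_integral a (Suc n)"
    using lorentz_integral_Suc[OF Suc.prems, of n] \<open>c > 0\<close> unfolding c_def by (simp add: field_simps)
  moreover have "((a + real n + 1)^2 * (indicator {0..} t * lorentz_weight a (Suc n) t)
            - a^2 * (indicator {0..} t * lorentz_weight (a + 1) (Suc n) t)) / c
      = indicator {0..} t * lorentz_weight a (Suc (Suc n)) t" for t
    using lorentz_weight_Suc_Suc[OF Suc.prems, of n t] \<open>c > 0\<close> unfolding c_def
    by (simp add: field_simps right_diff_distrib split: split_indicator)
  ultimately show ?case by simp
qed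

lemma set_integral_lorentz_weight:
  assumes "a > 0"
  shows "set_integrable lborel {0..} (lorentz_weight a (Suc n))"
    and "(LBINT t:{0..}. lorentz_weight a (Suc n) t) = lorentz_integral a n"
  using has_bochner_integral_lorentz_weight[OF assms, of n]
  unfolding set_integrable_def set_lebesgue_integral_def
  by (simp_all add: has_bochner_integral_iff)

section \<open>Asymptotics via the Gamma function\<close>

lemma pochhammer_Suc_eq_Gamma_series:
  fixes x :: real
  assumes "x > 0" "n > 0"
  shows "pochhammer x (Suc n) = fact n * real n powr x / Gamma_series x n"
  using assms pochhammer_pos[of x "Suc n"]
  by (simp add: Gamma_series_def powr_def field_simps)

lemma tendsto_pochhammer_ratio:
  fixes x y :: real
  assumes "x > 0" "y > 0"
  shows "(\<lambda>n. pochhammer x (Suc n) / pochhammer y (Suc n) * real n powr (y - x)) \<longlonglongrightarrow> Gamma y / Gamma x"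
proof (rule Lim_transform_eventually)
  show "(\<lambda>n. Gamma_series y n / Gamma_series x n) \<longlonglongrightarrow> Gamma y / Gamma x"
    using \<open>x > 0\<close> by (intro tendsto_intros) (auto simp: Gamma_eq_zero_iff nonpos_Ints_def)
  show "\<forall>\<^sub>F n in sequentially. Gamma_series y n / Gamma_series x n
      = pochhammer x (Suc n) / pochhammer y (Suc n) * real n powr (y - x)"
    using eventually_gt_at_top[of "0::nat"]
  proof eventually_elim
    case (elim n)
    have "Gamma_series x n > 0" "Gamma_series y n > 0"
      using assms unfolding Gamma_series_def by (simp_all add: pochhammer_pos)
    then show ?case
      using assms elim
      by (simp add: pochhammer_Suc_eq_Gamma_series powr_diff field_simps)
  qed
qed

lemma lorentz_integral_eq_pochhammer_ratios:
  fixes a :: real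
  assumes a: "a > 0" and n: "n > 0"
  shows "lorentz_integral a n
       = pi / 2 * (pochhammer a (Suc n) / pochhammer (a + 1/2) (Suc n) * real n powr (1/2))
           * (pochhammer (1/2) (Suc n) / pochhammer 1 (Suc n) * real n powr (1/2))
           * ((a + 1/2 + real n) * (real n + 1) / (real n * (real n + 1/2)))"
proof -
  define P B H F where "P = pochhammer a (Suc n)" and "B = pochhammer (a + 1/2) n"
    and "H = pochhammer (1/2 :: real) n" and "F = (fact n :: real)"
  define r M D E where "r = real n powr (1/2)" and "M = real n + 1/2" and "D = a + 1/2 + real n"
    and "E = real n + 1"
  have pos: "P > 0" "B > 0" "F > 0" "M > 0" "D > 0" "E > 0" "real n > 0"
    using a n unfolding P_def B_def F_def M_def D_def E_def by (simp_all add: pochhammer_pos)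
  have "r * r = real n"
    using n unfolding r_def by (simp flip: powr_add)
  have ratios: "pochhammer a (Suc n) / pochhammer (a + 1/2) (Suc n) * real n powr (1/2) = P / (B * D) * r"
    "pochhammer (1/2) (Suc n) / pochhammer 1 (Suc n) * real n powr (1/2) = H * M / (F * E) * r"
    unfolding P_def B_def H_def F_def r_def M_def D_def E_def
    by (simp_all add: pochhammer_Suc pochhammer_fact[symmetric] add_ac)
  have closed_form: "lorentz_integral a n = pi / 2 * P * H / (B * F)"
    unfolding lorentz_integral_def P_def B_def H_def F_def ..
  show ?thesis
    unfolding closed_form ratios D_def[symmetric] M_def[symmetric] E_def[symmetric] using pos \<open>r * r = real n\<close>
    by (simp add: field_simps)
qed

lemma tendsto_lorentz_integral:
  fixes a :: real
  assumes a: "a > 0"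
  shows "lorentz_integral a \<longlonglongrightarrow> 1/2 * sqrt pi * Gamma (a + 1/2) / Gamma a"
proof (rule Lim_transform_eventually)
  have "(\<lambda>n. pochhammer a (Suc n) / pochhammer (a + 1/2) (Suc n) * real n powr (1/2))
      \<longlonglongrightarrow> Gamma (a + 1/2) / Gamma a"
    using tendsto_pochhammer_ratio[of a "a + 1/2"] a by simp
  moreover have "(\<lambda>n. pochhammer (1/2) (Suc n) / pochhammer 1 (Suc n) * real n powr (1/2))
      \<longlonglongrightarrow> 1 / sqrt pi"
    using tendsto_pochhammer_ratio[of "1/2" 1] by (simp add: Gamma_one_half_real)
  moreover have "(\<lambda>n. (a + 1/2 + real n) * (real n + 1) / (real n * (real n + 1/2))) \<longlonglongrightarrow> 1"
    by real_asymp
  ultimately have "(\<lambda>n. pi / 2 * (pochhammer a (Suc n) / pochhammer (a + 1/2) (Suc n) * real n powr (1/2))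
           * (pochhammer (1/2) (Suc n) / pochhammer 1 (Suc n) * real n powr (1/2))
           * ((a + 1/2 + real n) * (real n + 1) / (real n * (real n + 1/2))))
      \<longlonglongrightarrow> pi / 2 * (Gamma (a + 1/2) / Gamma a) * (1 / sqrt pi) * 1"
    by (intro tendsto_mult tendsto_const)
  also have "pi / 2 * (Gamma (a + 1/2) / Gamma a) * (1 / sqrt pi) * 1
      = 1/2 * (pi / sqrt pi) * Gamma (a + 1/2) / Gamma a"
    by simp
  also have "pi / sqrt pi = sqrt pi"
    by (simp add: real_div_sqrt)
  finally show "(\<lambda>n. pi / 2 * (pochhammer a (Suc n) / pochhammer (a + 1/2) (Suc n) * real n powr (1/2))
           * (pochhammer (1/2) (Suc n) / pochhammer 1 (Suc n) * real n powr (1/2))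
           * ((a + 1/2 + real n) * (real n + 1) / (real n * (real n + 1/2))))
      \<longlonglongrightarrow> 1/2 * sqrt pi * Gamma (a + 1/2) / Gamma a" .
  show "\<forall>\<^sub>F n in sequentially. pi / 2 * (pochhammer a (Suc n) / pochhammer (a + 1/2) (Suc n) * real n powr (1/2))
           * (pochhammer (1/2) (Suc n) / pochhammer 1 (Suc n) * real n powr (1/2))
           * ((a + 1/2 + real n) * (real n + 1) / (real n * (real n + 1/2))) = lorentz_integral a n"
    using eventually_gt_at_top[of "0::nat"]
    by eventually_elim (simp only: lorentz_integral_eq_pochhammer_ratios[OF a])
qed

lemma space_cube: "space (cube k R) = (\<Pi>\<^sub>E i\<in>{..<2*k}. {0..R})"
  unfolding cube_def space_PiM by (simp add: space_restrict_space)

lemma product_sigma_finite_lborel_Icc: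
  "product_sigma_finite (\<lambda>_::'i. restrict_space lborel {a..b::real})"
  unfolding product_sigma_finite_def
  by (auto intro!: sigma_finite_measure_restrict_space lborel.sigma_finite_measure_axioms)

lemma finite_measure_lborel_Icc: "finite_measure (restrict_space lborel {a..b::real})"
  by (intro finite_measureI) (simp add: emeasure_restrict_space space_restrict_space emeasure_lborel_Icc_eq)

lemma finite_measure_cube: "finite_measure (cube k R)"
proof (rule finite_measureI)
  interpret product_sigma_finite "\<lambda>_::nat. restrict_space lborel {0..R}"
    by (rule product_sigma_finite_lborel_Icc)
  have "emeasure (cube k R) (space (cube k R)) = (\<Prod>i<2*k. emeasure lborel {0..R})"
    unfolding cube_def space_PiM
    by (subst emeasure_PiM) (auto simp: emeasure_restrict_space space_restrict_space sets_restrict_space_iff)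
  then show "emeasure (cube k R) (space (cube k R)) \<noteq> \<infinity>"
    by (simp add: ennreal_power power_eq_top_ennreal emeasure_lborel_Icc_eq)
qed

lemma measurable_num_arg [measurable]: "num_arg k \<in> borel_measurable (cube k R)"
  unfolding num_arg_def cube_def
  by (intro borel_measurable_sum borel_measurable_times borel_measurable_const
      measurable_compose[OF measurable_component_singleton]) (auto simp: measurable_restrict_space1)

lemma measurable_denom [measurable]: "denom a k \<in> borel_measurable (cube k R)"
  unfolding denom_def cube_def
  by (intro borel_measurable_add borel_measurable_sum borel_measurable_divide borel_measurable_const
      measurable_compose[OF measurable_component_singleton]) (auto simp: measurable_restrict_space1)

lemma measurable_cis [measurable]: "cis \<in> borel_measurable borel"
  by (intro borel_measurable_continuous_onI continuous_intros)

lemma denom_eq_sum: "denom a k x = (\<Sum>i<2*k. x i / (a + real (i div 2)))"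
proof (induction k)
  case (Suc k)
  have "2 * Suc k = Suc (Suc (2 * k))" by simp
  then show ?case
    using Suc.IH by (simp add: denom_def)
qed (simp add: denom_def)

lemma denom_nonneg: "a > 0 \<Longrightarrow> x \<in> space (cube k R) \<Longrightarrow> 0 \<le> denom a k x"
  unfolding space_cube denom_eq_sum by (intro sum_nonneg divide_nonneg_pos) (auto simp: PiE_iff)

lemma AE_cube_component_neq:
  assumes "i < 2*k"
  shows "AE x in cube k R. x i \<noteq> c"
proof -
  interpret product_sigma_finite "\<lambda>_::nat. restrict_space lborel {0..R}"
    by (rule product_sigma_finite_lborel_Icc)
  define E where "E j = (if j = i then {c} \<inter> {0..R} else {0..R})" for j
  have E: "E j \<in> sets (restrict_space lborel {0..R})" for j
    unfolding E_def by (auto simp: sets_restrict_space_iff)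
  have "emeasure (cube k R) (\<Pi>\<^sub>E j\<in>{..<2*k}. E j) = (\<Prod>j<2*k. emeasure (restrict_space lborel {0..R}) (E j))"
    unfolding cube_def by (rule emeasure_PiM) (auto intro: E)
  also have "\<dots> = 0"
    using assms by (intro prod_zero bexI[of _ i]) (auto simp: E_def emeasure_restrict_space Int_insert_left)
  finally have "(\<Pi>\<^sub>E j\<in>{..<2*k}. E j) \<in> null_sets (cube k R)"
    unfolding cube_def by (auto intro!: sets_PiM_I_finite E)
  then show ?thesis
    by (rule AE_I') (auto simp: space_cube E_def PiE_iff extensional_def)
qed

lemma AE_denom_pos:
  assumes "k \<ge> 1" "a > 0"
  shows "AE x in cube k R. 0 < denom a k x"
proof -
  have "AE x in cube k R. x 0 \<noteq> 0"
    using assms(1) by (intro AE_cube_component_neq) simp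
  with AE_space show ?thesis
  proof eventually_elim
    case (elim x)
    have "0 \<le> x 0"
      using elim assms(1) by (auto simp: space_cube PiE_iff)
    with elim assms(2) have "0 < x 0 / (a + real (0 div 2))"
      by simp
    also have "\<dots> \<le> denom a k x"
      unfolding denom_eq_sum using elim assms
      by (intro member_le_sum divide_nonneg_pos) (auto simp: space_cube PiE_iff)
    finally show ?case .
  qed
qed

section \<open>Exponential integrals over the cube\<close>

lemma integral_exp_mult_Icc:
  fixes z :: complex
  assumes "z \<noteq> 0" "R \<ge> 0"
  shows "integral\<^sup>L (restrict_space lborel {0..R}) (\<lambda>y. exp (of_real y * z)) = (exp (of_real R * z) - 1) / z"
proof -
  have "integral\<^sup>L (restrict_space lborel {0..R}) (\<lambda>y. exp (of_real y * z))
      = (LBINT y = ereal 0..ereal R. exp (of_real y * z))"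
    using assms(2) by (simp add: integral_restrict_space interval_integral_Icc set_lebesgue_integral_def)
  also have "\<dots> = exp (of_real R * z) / z - exp (of_real 0 * z) / z"
  proof (rule interval_integral_FTC_finite)
    fix y :: real
    have "((\<lambda>w. exp (w * z) / z) has_field_derivative exp (of_real y * z)) (at (of_real y))"
      using assms(1) by (auto intro!: derivative_eq_intros)
    then show "((\<lambda>y. exp (of_real y * z) / z) has_vector_derivative exp (of_real y * z))
        (at y within {min 0 R..max 0 R})"
      by (rule has_vector_derivative_real_field)
  qed (intro continuous_intros)
  finally show ?thesis by (simp add: diff_divide_distrib)
qed

lemma integral_exp_neg_mult_Icc:
  fixes D :: real
  assumes "D > 0" "T \<ge> 0"
  shows "integral\<^sup>L (restrict_space lborel {0..T}) (\<lambda>t. exp (- t * D)) = (1 - exp (- T * D)) / D"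
proof -
  have "complex_of_real (integral\<^sup>L (restrict_space lborel {0..T}) (\<lambda>t. exp (- t * D)))
      = integral\<^sup>L (restrict_space lborel {0..T}) (\<lambda>t. of_real (exp (- t * D)))"
    by simp
  also have "\<dots> = integral\<^sup>L (restrict_space lborel {0..T}) (\<lambda>t. exp (of_real t * of_real (- D)))"
    by (simp flip: exp_of_real)
  also have "\<dots> = of_real ((1 - exp (- T * D)) / D)"
    using assms by (subst integral_exp_mult_Icc) (simp_all flip: exp_of_real add: field_simps)
  finally show ?thesis by (simp only: of_real_eq_iff)
qed

lemma tendsto_one_minus_exp_div:
  fixes D :: real
  assumes "D > 0"
  shows "((\<lambda>T. (1 - exp (- T * D)) / D) \<longlongrightarrow> 1 / D) at_top"
  using assms by real_asymp (simp add: inverse_eq_divide)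

lemma abs_one_minus_exp_div_le:
  fixes D :: real
  assumes "D > 0" "T \<ge> 0"
  shows "\<bar>(1 - exp (- T * D)) / D\<bar> \<le> 1 / D"
proof -
  have "exp (- T * D) \<le> 1"
    using assms by simp
  then show ?thesis
    using assms(1) by (simp add: divide_right_mono)
qed

lemma prod_lessThan_double:
  fixes f :: "nat \<Rightarrow> 'a::comm_monoid_mult"
  shows "(\<Prod>i<2*k. f i) = (\<Prod>m<k. f (2*m) * f (2*m+1))"
proof (induction k)
  case (Suc k)
  have "2 * Suc k = Suc (Suc (2 * k))" by simp
  then show ?case using Suc.IH by (simp add: mult.assoc)
qed simp

lemma integral_cube_exp_sum:
  fixes z :: "nat \<Rightarrow> complex"
  assumes "\<And>i. i < 2*k \<Longrightarrow> z i \<noteq> 0" "R \<ge> 0"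
  shows "integral\<^sup>L (cube k R) (\<lambda>x. exp (\<Sum>i<2*k. of_real (x i) * z i))
       = (\<Prod>i<2*k. (exp (of_real R * z i) - 1) / z i)"
proof -
  interpret product_sigma_finite "\<lambda>_::nat. restrict_space lborel {0..R}"
    by (rule product_sigma_finite_lborel_Icc)
  have "integral\<^sup>L (cube k R) (\<lambda>x. exp (\<Sum>i<2*k. of_real (x i) * z i))
      = (\<integral>x. (\<Prod>i<2*k. exp (of_real (x i) * z i)) \<partial>cube k R)"
    by (simp add: exp_sum)
  also have "\<dots> = (\<Prod>i<2*k. integral\<^sup>L (restrict_space lborel {0..R}) (\<lambda>y. exp (of_real y * z i)))"
    unfolding cube_def
  proof (rule product_integral_prod)
    fix i :: nat
    have "integrable lborel (\<lambda>y. indicator {0..R} y *\<^sub>R exp (of_real y * z i))"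
      by (intro borel_integrable_compact continuous_intros) auto
    then show "integrable (restrict_space lborel {0..R}) (\<lambda>y. exp (of_real y * z i))"
      by (subst integrable_restrict_space) auto
  qed simp
  also have "\<dots> = (\<Prod>i<2*k. (exp (of_real R * z i) - 1) / z i)"
    using assms by (intro prod.cong) (simp_all add: integral_exp_mult_Icc)
  finally show ?thesis .
qed

text \<open>The integral of \<open>exp ((\<i> - s) y)\<close> over \<open>0 \<le> y \<le> R\<close>.\<close>

definition osc_integral :: "real \<Rightarrow> real \<Rightarrow> complex" where
  "osc_integral s R = (exp (of_real R * (\<i> - of_real s)) - 1) / (\<i> - of_real s)"

definition cube_kernel :: "real \<Rightarrow> nat \<Rightarrow> real \<Rightarrow> real \<Rightarrow> real" where
  "cube_kernel a k R t = (\<Prod>m<k. (cmod (osc_integral (t / (a + real m)) R))^2)"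

lemma integral_cube_cis_exp:
  assumes "R \<ge> 0"
  shows "integral\<^sup>L (cube k R) (\<lambda>x. cis (num_arg k x) * of_real (exp (- t * denom a k x)))
       = of_real (cube_kernel a k R t)"
proof -
  define z where "z i = \<i> * (-1)^i - of_real (t / (a + real (i div 2)))" for i
  have "z i \<noteq> 0" for i
    using arg_cong[of _ 0 Im] unfolding z_def by force
  have "cis (num_arg k x) * of_real (exp (- t * denom a k x)) = exp (\<Sum>i<2*k. of_real (x i) * z i)" for x
    unfolding z_def num_arg_def denom_eq_sum cis_conv_exp
    by (simp add: algebra_simps sum_subtractf sum_distrib_left sum_divide_distrib exp_diff sum_negf exp_minus divide_inverse
        flip: exp_of_real)
  \<comment> \<open>coordinates \<open>2m\<close> and \<open>2m+1\<close> carry conjugate exponents\<close>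
  moreover have "(exp (of_real R * z (2*m)) - 1) / z (2*m) * ((exp (of_real R * z (2*m+1)) - 1) / z (2*m+1))
      = of_real ((cmod (osc_integral (t / (a + real m)) R))^2)" for m
  proof -
    have "z (2*m) = \<i> - of_real (t / (a + real m))" "z (2*m+1) = cnj (\<i> - of_real (t / (a + real m)))"
      unfolding z_def by (simp_all add: complex_eq_iff)
    then show ?thesis
      unfolding complex_norm_square osc_integral_def by (simp add: exp_cnj)
  qed
  ultimately show ?thesis
    using assms \<open>\<And>i. z i \<noteq> 0\<close>
    by (simp add: integral_cube_exp_sum prod_lessThan_double cube_kernel_def)
qed

lemma measurable_cube_kernel [measurable]: "cube_kernel a k R \<in> borel_measurable borel"
  unfolding cube_kernel_def osc_integral_def by measurable

lemma norm_osc_integral_le: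
  assumes "s \<ge> 0" "R \<ge> 0"
  shows "(cmod (osc_integral s R))^2 \<le> 4 / (1 + s^2)"
proof -
  have "cmod (exp (of_real R * (\<i> - of_real s))) \<le> 1"
    using assms by (simp add: norm_exp_eq_Re)
  then have "cmod (exp (of_real R * (\<i> - of_real s)) - 1) \<le> 2"
    using norm_triangle_ineq4[of "exp (of_real R * (\<i> - of_real s))" 1] norm_one[where 'a=complex]
    by linarith
  then have "(cmod (exp (of_real R * (\<i> - of_real s)) - 1))^2 \<le> 2^2"
    by (intro power_mono) simp_all
  moreover have "(cmod (\<i> - of_real s))^2 = 1 + s^2"
    by (simp add: cmod_power2)
  ultimately show ?thesis
    unfolding osc_integral_def norm_divide power_divide
    by (simp add: divide_right_mono add_pos_nonneg)
qed

lemma tendsto_norm_osc_integral: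
  assumes "s > 0"
  shows "((\<lambda>R. (cmod (osc_integral s R))^2) \<longlongrightarrow> 1 / (1 + s^2)) at_top"
proof -
  have "((\<lambda>R. exp (- (R * s))) \<longlongrightarrow> 0) at_top"
    using assms by real_asymp
  then have "((\<lambda>R. norm (exp (of_real R * (\<i> - of_real s)))) \<longlongrightarrow> 0) at_top"
    by (simp add: norm_exp_eq_Re)
  then have "((\<lambda>R. exp (of_real R * (\<i> - of_real s))) \<longlongrightarrow> 0) at_top"
    by (rule tendsto_norm_zero_cancel)
  moreover have "\<i> - of_real s \<noteq> 0"
    by (simp add: complex_eq_iff)
  ultimately have "((\<lambda>R. (cmod (osc_integral s R))^2) \<longlongrightarrow> (cmod ((0 - 1) / (\<i> - of_real s)))^2) at_top"
    unfolding osc_integral_def by (intro tendsto_intros)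
  moreover have "(cmod ((0 - 1) / (\<i> - of_real s)))^2 = 1 / (1 + s^2)"
    by (simp add: norm_divide power_divide cmod_power2)
  ultimately show ?thesis by simp
qed

lemma cube_kernel_nonneg: "0 \<le> cube_kernel a k R t"
  unfolding cube_kernel_def by (intro prod_nonneg) simp

lemma cube_kernel_le:
  assumes "a > 0" "k \<ge> 1" "R \<ge> 0" "t \<ge> 0"
  shows "cube_kernel a k R t \<le> 4^k * lorentz_weight a 1 t"
proof -
  have "cube_kernel a k R t \<le> (\<Prod>m<k. 4 / (1 + (t / (a + real m))^2))"
    unfolding cube_kernel_def using assms by (intro prod_mono conjI norm_osc_integral_le) simp_all
  also have "\<dots> = (\<Prod>m<k. 4) * lorentz_weight a k t"
    unfolding lorentz_weight_def prod.distrib[symmetric] by simp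
  also have "\<dots> \<le> 4^k * lorentz_weight a 1 t"
    using lorentz_weight_antimono[OF assms(2)] by simp
  finally show ?thesis .
qed

lemma tendsto_cube_kernel:
  assumes "a > 0" "t > 0"
  shows "((\<lambda>R. cube_kernel a k R t) \<longlongrightarrow> lorentz_weight a k t) at_top"
  unfolding cube_kernel_def lorentz_weight_def
proof (rule tendsto_prod)
  fix m
  show "((\<lambda>R. (cmod (osc_integral (t / (a + real m)) R))^2) \<longlongrightarrow> 1 / (1 + (t / (a + real m))^2)) at_top"
    using assms by (intro tendsto_norm_osc_integral) simp
qed

lemma set_integrable_cube_kernel:
  assumes "a > 0" "k \<ge> 1" "R \<ge> 0"
  shows "set_integrable lborel {0..} (cube_kernel a k R)"
proof (rule set_integrable_bound)
  show "set_integrable lborel {0..} (\<lambda>t. 4^k * lorentz_weight a 1 t)"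
    using set_integral_lorentz_weight(1)[OF assms(1), of 0] by (intro set_integrable_mult_right) simp
  show "AE t in lborel. t \<in> {0..} \<longrightarrow> norm (cube_kernel a k R t) \<le> norm (4^k * lorentz_weight a 1 t)"
    using cube_kernel_le[OF assms] by (intro AE_I2) (auto simp: cube_kernel_nonneg lorentz_weight_nonneg)
qed (simp add: set_borel_measurable_def)

lemma tendsto_set_integral_cube_kernel:
  assumes "a > 0" "k \<ge> 1"
  shows "((\<lambda>R. LBINT t:{0..}. cube_kernel a k R t) \<longlongrightarrow> (LBINT t:{0..}. lorentz_weight a k t)) at_top"
  unfolding set_lebesgue_integral_def
proof (rule integral_dominated_convergence_at_top)
  show "integrable lborel (\<lambda>t. indicator {0..} t *\<^sub>R (4^k * lorentz_weight a 1 t))"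
    using set_integral_lorentz_weight(1)[OF assms(1), of 0]
    unfolding set_integrable_def[symmetric] by (intro set_integrable_mult_right) simp
  show "\<forall>\<^sub>F R in at_top. AE t in lborel.
      norm (indicator {0..} t *\<^sub>R cube_kernel a k R t) \<le> indicator {0..} t *\<^sub>R (4^k * lorentz_weight a 1 t)"
    using eventually_ge_at_top[of "0::real"]
  proof eventually_elim
    case (elim R)
    show ?case
      using cube_kernel_le[OF assms elim] by (intro AE_I2) (auto simp: cube_kernel_nonneg split: split_indicator)
  qed
  show "AE t in lborel. ((\<lambda>R. indicator {0..} t *\<^sub>R cube_kernel a k R t)
      \<longlongrightarrow> indicator {0..} t *\<^sub>R lorentz_weight a k t) at_top"
    using AE_lborel_singleton[of 0]
    by eventually_elim (use assms in \<open>auto intro: tendsto_cube_kernel split: split_indicator\<close>)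
qed simp_all

section \<open>The oscillatory integrals\<close>

lemma integrable_Complex:
  assumes "integrable M f" "integrable M g"
  shows "integrable M (\<lambda>x. Complex (f x) (g x))"
proof -
  have "integrable M (\<lambda>x. of_real (f x) + \<i> * of_real (g x))"
    using assms by (intro Bochner_Integration.integrable_add integrable_mult_right integrable_of_real)
  then show ?thesis by (simp add: Complex_eq)
qed

lemma integrable_cube_Icc_cis_exp:
  assumes "a > 0"
  shows "integrable (cube k R \<Otimes>\<^sub>M restrict_space lborel {0..T})
           (\<lambda>(x, t). cis (num_arg k x) * of_real (exp (- t * denom a k x)))"
proof -
  interpret finite_measure "cube k R \<Otimes>\<^sub>M restrict_space lborel {0..T}"
    by (intro finite_measure_pair_measure finite_measure_cube finite_measure_lborel_Icc)
  have [measurable]: "snd \<in> cube k R \<Otimes>\<^sub>M restrict_space lborel {0..T} \<rightarrow>\<^sub>M borel"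
    by (rule measurable_compose[OF measurable_snd measurable_restrict_space1]) simp
  have [measurable]: "(\<lambda>p. num_arg k (fst p)) \<in> borel_measurable (cube k R \<Otimes>\<^sub>M restrict_space lborel {0..T})"
    "(\<lambda>p. denom a k (fst p)) \<in> borel_measurable (cube k R \<Otimes>\<^sub>M restrict_space lborel {0..T})"
    by (rule measurable_compose[OF measurable_fst]; simp)+
  show ?thesis
  proof (rule integrable_const_bound[OF AE_I2])
    fix p assume "p \<in> space (cube k R \<Otimes>\<^sub>M restrict_space lborel {0..T})"
    then have "0 \<le> denom a k (fst p)" "0 \<le> snd p"
      using assms by (auto simp: space_pair_measure space_restrict_space intro: denom_nonneg)
    then show "norm (case p of (x, t) \<Rightarrow> cis (num_arg k x) * of_real (exp (- t * denom a k x))) \<le> 1"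
      by (auto simp: norm_mult case_prod_beta intro: mult_nonneg_nonneg)
  qed (unfold case_prod_beta, measurable)
qed

lemma integral_cube_cis_truncated:
  assumes "k \<ge> 1" "a > 0" "R \<ge> 0" "T \<ge> 0"
  shows "integral\<^sup>L (cube k R) (\<lambda>x. cis (num_arg k x) * of_real ((1 - exp (- T * denom a k x)) / denom a k x))
       = of_real (integral\<^sup>L (restrict_space lborel {0..T}) (cube_kernel a k R))"
proof -
  let ?f = "\<lambda>x t. cis (num_arg k x) * of_real (exp (- t * denom a k x))"
  interpret finite_measure "cube k R" by (rule finite_measure_cube)
  interpret T: finite_measure "restrict_space lborel {0..T}" by (rule finite_measure_lborel_Icc)
  interpret pair_sigma_finite "cube k R" "restrict_space lborel {0..T}" ..
  have int: "integrable (cube k R \<Otimes>\<^sub>M restrict_space lborel {0..T}) (case_prod ?f)"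
    using integrable_cube_Icc_cis_exp[OF assms(2)] by (simp add: case_prod_beta')
  have "of_real (integral\<^sup>L (restrict_space lborel {0..T}) (cube_kernel a k R))
      = integral\<^sup>L (restrict_space lborel {0..T}) (\<lambda>t. integral\<^sup>L (cube k R) (\<lambda>x. ?f x t))"
    unfolding integral_cube_cis_exp[OF assms(3)] by simp
  also have "\<dots> = integral\<^sup>L (cube k R) (\<lambda>x. integral\<^sup>L (restrict_space lborel {0..T}) (?f x))"
    using int by (rule Fubini_integral)
  also have "\<dots> = integral\<^sup>L (cube k R) (\<lambda>x. cis (num_arg k x) * of_real ((1 - exp (- T * denom a k x)) / denom a k x))"
  proof (rule integral_cong_AE)
    show "AE x in cube k R. integral\<^sup>L (restrict_space lborel {0..T}) (?f x)
        = cis (num_arg k x) * of_real ((1 - exp (- T * denom a k x)) / denom a k x)"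
      using AE_denom_pos[OF assms(1,2)]
    proof eventually_elim
      case (elim x)
      have "integral\<^sup>L (restrict_space lborel {0..T}) (?f x)
          = cis (num_arg k x) * of_real (integral\<^sup>L (restrict_space lborel {0..T}) (\<lambda>t. exp (- t * denom a k x)))"
        by simp
      then show ?case
        unfolding integral_exp_neg_mult_Icc[OF elim assms(4)] .
    qed
    show "(\<lambda>x. integral\<^sup>L (restrict_space lborel {0..T}) (?f x)) \<in> borel_measurable (cube k R)"
      using borel_measurable_integrable[OF int] by (rule T.borel_measurable_lebesgue_integral)
  qed measurable
  finally show ?thesis ..
qed

lemma tendsto_integral_cube_cis_truncated:
  assumes "k \<ge> 1" "a > 0"
    and int: "integrable (cube k R) (\<lambda>x. cis (num_arg k x) / of_real (denom a k x))"
  shows "((\<lambda>T. integral\<^sup>L (cube k R) (\<lambda>x. cis (num_arg k x) * of_real ((1 - exp (- T * denom a k x)) / denom a k x)))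
      \<longlongrightarrow> integral\<^sup>L (cube k R) (\<lambda>x. cis (num_arg k x) / of_real (denom a k x))) at_top"
proof (rule integral_dominated_convergence_at_top[OF _ _ integrable_norm[OF int]])
  let ?g = "\<lambda>T x. cis (num_arg k x) * of_real ((1 - exp (- T * denom a k x)) / denom a k x)"
  show "AE x in cube k R. ((\<lambda>T. ?g T x) \<longlongrightarrow> cis (num_arg k x) / of_real (denom a k x)) at_top"
    using AE_denom_pos[OF assms(1,2)]
  proof eventually_elim
    case (elim x)
    have "((\<lambda>T. ?g T x) \<longlongrightarrow> cis (num_arg k x) * of_real (1 / denom a k x)) at_top"
      by (intro tendsto_mult_left tendsto_of_real tendsto_one_minus_exp_div elim)
    then show ?case by simp
  qed
  show "\<forall>\<^sub>F T in at_top. AE x in cube k R. norm (?g T x) \<le> norm (cis (num_arg k x) / of_real (denom a k x))"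
  proof (rule eventually_mono[OF eventually_ge_at_top[of "0::real"]])
    fix T :: real
    assume "0 \<le> T"
    show "AE x in cube k R. norm (?g T x) \<le> norm (cis (num_arg k x) / of_real (denom a k x))"
      using AE_denom_pos[OF assms(1,2)]
    proof eventually_elim
      case (elim x)
      have "norm (?g T x) = \<bar>(1 - exp (- T * denom a k x)) / denom a k x\<bar>"
        by (simp only: norm_mult norm_of_real norm_cis mult_1)
      also have "\<dots> \<le> 1 / denom a k x"
        using abs_one_minus_exp_div_le[OF elim \<open>0 \<le> T\<close>] .
      also have "\<dots> = norm (cis (num_arg k x) / of_real (denom a k x))"
        using elim by (simp add: norm_divide)
      finally show ?case .
    qed
  qed
  show "(\<lambda>x. cis (num_arg k x) / of_real (denom a k x)) \<in> borel_measurable (cube k R)"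
    by measurable
  show "?g T \<in> borel_measurable (cube k R)" for T
    by measurable
qed

lemma integral_cube_cis_div_denom:
  assumes "k \<ge> 1" "a > 0" "R \<ge> 0"
    and int: "integrable (cube k R) (\<lambda>x. cis (num_arg k x) / of_real (denom a k x))"
  shows "integral\<^sup>L (cube k R) (\<lambda>x. cis (num_arg k x) / of_real (denom a k x))
       = of_real (LBINT t:{0..}. cube_kernel a k R t)"
proof (rule tendsto_unique[OF trivial_limit_at_top_linorder tendsto_integral_cube_cis_truncated[OF assms(1,2) int]])
  show "((\<lambda>T. integral\<^sup>L (cube k R) (\<lambda>x. cis (num_arg k x) * of_real ((1 - exp (- T * denom a k x)) / denom a k x)))
      \<longlongrightarrow> of_real (LBINT t:{0..}. cube_kernel a k R t)) at_top"
  proof (rule Lim_transform_eventually)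
    show "((\<lambda>T. complex_of_real (LBINT t:{0..T}. cube_kernel a k R t))
        \<longlongrightarrow> of_real (LBINT t:{0..}. cube_kernel a k R t)) at_top"
      using assms by (intro tendsto_of_real tendsto_set_lebesgue_integral_at_top set_integrable_cube_kernel) auto
    show "\<forall>\<^sub>F T in at_top. complex_of_real (LBINT t:{0..T}. cube_kernel a k R t)
        = integral\<^sup>L (cube k R) (\<lambda>x. cis (num_arg k x) * of_real ((1 - exp (- T * denom a k x)) / denom a k x))"
      using eventually_ge_at_top[of "0::real"]
    proof eventually_elim
      case (elim T)
      show ?case
        unfolding integral_cube_cis_truncated[OF assms(1-3) elim]
        by (simp add: integral_restrict_space set_lebesgue_integral_def)
    qed
  qed
qed

lemma cis_div_denom_eq_Complex:
  "cis (num_arg k x) / of_real (denom a k x) = Complex (cos_integrand a k x) (sin_integrand a k x)"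
  unfolding cos_integrand_def sin_integrand_def by (simp add: complex_eq_iff)

lemma integral_cube_cos_sin_integrand:
  assumes "k \<ge> 1" "a > 0" "R \<ge> 0"
    and "integrable (cube k R) (cos_integrand a k)" "integrable (cube k R) (sin_integrand a k)"
  shows "integral\<^sup>L (cube k R) (cos_integrand a k) = (LBINT t:{0..}. cube_kernel a k R t)"
    and "integral\<^sup>L (cube k R) (sin_integrand a k) = 0"
proof -
  let ?h = "\<lambda>x. cis (num_arg k x) / of_real (denom a k x)"
  have int: "integrable (cube k R) ?h"
    unfolding cis_div_denom_eq_Complex using assms(4,5) by (rule integrable_Complex)
  have "integral\<^sup>L (cube k R) (cos_integrand a k) = Re (integral\<^sup>L (cube k R) ?h)"
    using integral_Re[OF int] by (simp add: cis_div_denom_eq_Complex)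
  then show "integral\<^sup>L (cube k R) (cos_integrand a k) = (LBINT t:{0..}. cube_kernel a k R t)"
    by (simp add: integral_cube_cis_div_denom[OF assms(1-3) int])
  have "integral\<^sup>L (cube k R) (sin_integrand a k) = Im (integral\<^sup>L (cube k R) ?h)"
    using integral_Im[OF int] by (simp add: cis_div_denom_eq_Complex)
  then show "integral\<^sup>L (cube k R) (sin_integrand a k) = 0"
    by (simp add: integral_cube_cis_div_denom[OF assms(1-3) int])
qed

lemma improper_integral_cos_sin_integrand:
  assumes "k \<ge> 1" "a > 0"
    and "improper_convergent k (cos_integrand a k)" "improper_convergent k (sin_integrand a k)"
  shows "improper_integral k (cos_integrand a k) = lorentz_integral a (k - 1)"
    and "improper_integral k (sin_integrand a k) = 0"
proof -
  have int: "integrable (cube k R) (cos_integrand a k)" "integrable (cube k R) (sin_integrand a k)"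
    if "R \<ge> 0" for R
    using assms(3,4) that unfolding improper_convergent_def by auto
  have cube_cos: "integral\<^sup>L (cube k R) (cos_integrand a k) = (LBINT t:{0..}. cube_kernel a k R t)"
    and cube_sin: "integral\<^sup>L (cube k R) (sin_integrand a k) = 0" if "R \<ge> 0" for R
    using integral_cube_cos_sin_integrand[OF assms(1,2) that int[OF that]] by simp_all
  have "((\<lambda>R. integral\<^sup>L (cube k R) (cos_integrand a k)) \<longlongrightarrow> lorentz_integral a (k - 1)) at_top"
  proof (rule Lim_transform_eventually)
    show "((\<lambda>R. LBINT t:{0..}. cube_kernel a k R t) \<longlongrightarrow> lorentz_integral a (k - 1)) at_top"
      using tendsto_set_integral_cube_kernel[OF assms(2,1)] set_integral_lorentz_weight(2)[OF assms(2), of "k - 1"]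
        assms(1) by simp
    show "\<forall>\<^sub>F R in at_top. (LBINT t:{0..}. cube_kernel a k R t) = integral\<^sup>L (cube k R) (cos_integrand a k)"
      using eventually_ge_at_top[of "0::real"] by eventually_elim (simp add: cube_cos)
  qed
  then show "improper_integral k (cos_integrand a k) = lorentz_integral a (k - 1)"
    unfolding improper_integral_def by (rule tendsto_Lim[OF trivial_limit_at_top_linorder])
  have "((\<lambda>R. integral\<^sup>L (cube k R) (sin_integrand a k)) \<longlongrightarrow> 0) at_top"
  proof (rule Lim_transform_eventually[OF tendsto_const])
    show "\<forall>\<^sub>F R in at_top. 0 = integral\<^sup>L (cube k R) (sin_integrand a k)"
      using eventually_ge_at_top[of "0::real"] by eventually_elim (simp add: cube_sin)
  qed
  then show "improper_integral k (sin_integrand a k) = 0"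
    unfolding improper_integral_def by (rule tendsto_Lim[OF trivial_limit_at_top_linorder])
qed

theorem theorem4p2:
  fixes a :: real
  assumes "a > 0"
    and "\<And>k. k \<ge> 1 \<Longrightarrow> improper_convergent k (cos_integrand a k)"
    and "\<And>k. k \<ge> 1 \<Longrightarrow> improper_convergent k (sin_integrand a k)"
  shows "(\<lambda>k. improper_integral k (cos_integrand a k))
           \<longlonglongrightarrow> 1/2 * sqrt pi * Gamma (a + 1/2) / Gamma a
         \<and> (\<forall>k\<ge>1. improper_integral k (sin_integrand a k) = 0)"
proof
  have "improper_integral (Suc n) (cos_integrand a (Suc n)) = lorentz_integral a n" for n
    using improper_integral_cos_sin_integrand(1)[OF _ assms(1) assms(2,3)] by simp
  then have "(\<lambda>n. improper_integral (Suc n) (cos_integrand a (Suc n)))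
      \<longlonglongrightarrow> 1/2 * sqrt pi * Gamma (a + 1/2) / Gamma a"
    using tendsto_lorentz_integral[OF assms(1)] by simp
  then show "(\<lambda>k. improper_integral k (cos_integrand a k)) \<longlonglongrightarrow> 1/2 * sqrt pi * Gamma (a + 1/2) / Gamma a"
    by (rule LIMSEQ_imp_Suc)
  show "\<forall>k\<ge>1. improper_integral k (sin_integrand a k) = 0"
    using improper_integral_cos_sin_integrand(2)[OF _ assms(1) assms(2,3)] by simp
qed

end
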